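(* Let $\mathit{VI}$ be a finite set of variables with $\#\mathit{VI}=n$ and let $k\in\mathbb{N}$ with $1\le k\le n$. Then $\mathit{TS}_k\subseteq\mathit{TSD}_k$. Furthermore, if $n>1$ then $\mathit{TS}_k\subsetneq\mathit{TSD}_k$.
   Context: $\mathit{SG}=\wp(\mathit{VI})\setminus\{\emptyset\}$ and $\mathit{SH}=\wp(\mathit{SG})$, ordered by set inclusion. For $S\in\mathit{SG}$, $\mathrm{tuples}_k(S)=\{T\subseteq S\mid \#T=k\}$, and for $sh\in\mathit{SH}$, $\mathrm{tuples}_k(sh)=\bigcup_{S'\in sh}\mathrm{tuples}_k(S')$. Define $\rho_{\mathit{TS}_k}(sh)=\{S\in\mathit{SG}\mid \mathrm{tuples}_k(S)\subseteq\mathrm{tuples}_k(sh)\}$ and $\mathit{TS}_k=\rho_{\mathit{TS}_k}(\mathit{SH})$. Define $\rho_{\mathit{TSD}_k}(sh)=\{\,S\in\mathit{SG}\mid \forall T\subseteq S:\ \#T<k\implies S=\bigcup\{U\in sh\mid T\subseteq U\subseteq S\}\,\}$ and $\mathit{TSD}_k=\rho_{\mathit{TSD}_k}(\mathit{SH})$. Both maps are upper closure operators on $\mathit{SH}$. *)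

theory Defs
  imports Main
begin

definition SG :: "'v set \<Rightarrow> 'v set set" where
  "SG VI = Pow VI - {{}}"

definition SH :: "'v set \<Rightarrow> 'v set set set" where
  "SH VI = Pow (SG VI)"

definition tuples :: "nat \<Rightarrow> 'v set \<Rightarrow> 'v set set" where
  "tuples k S = {T. T \<subseteq> S \<and> card T = k}"

definition tuples_sh :: "nat \<Rightarrow> 'v set set \<Rightarrow> 'v set set" where
  "tuples_sh k sh = (\<Union>S'\<in>sh. tuples k S')"

definition rho_TS :: "'v set \<Rightarrow> nat \<Rightarrow> 'v set set \<Rightarrow> 'v set set" where
  "rho_TS VI k sh = {S \<in> SG VI. tuples k S \<subseteq> tuples_sh k sh}"

definition TS :: "'v set \<Rightarrow> nat \<Rightarrow> 'v set set set" where
  "TS VI k = rho_TS VI k ` SH VI"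

definition rho_TSD :: "'v set \<Rightarrow> nat \<Rightarrow> 'v set set \<Rightarrow> 'v set set" where
  "rho_TSD VI k sh = {S \<in> SG VI. \<forall>T. T \<subseteq> S \<longrightarrow> card T < k \<longrightarrow>
        S = \<Union>{U \<in> sh. T \<subseteq> U \<and> U \<subseteq> S}}"

definition TSD :: "'v set \<Rightarrow> nat \<Rightarrow> 'v set set set" where
  "TSD VI k = rho_TSD VI k ` SH VI"

end

theory Submission
  imports Defs
begin

(* Every element x of TS_k is a fixpoint of rho_TSD_k: for a k-tuple T of a group S satisfying
   the TSD condition, pick t in T; the (k-1)-tuple T - {t} is contained in some group U of x
   with t in U and U a subset of S, so T is a k-tuple of U and hence already a tuple of the
   generating sh.  The inclusion is strict as soon as VI has two elements: {VI} is in TSD_k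
   (the condition for T = {} forces every S to be VI), but every element of TS_k is closed
   under nonempty subsets, because tuples_k is monotone. *)

lemma tuples_mono: "S \<subseteq> S' \<Longrightarrow> tuples k S \<subseteq> tuples k S'"
  unfolding tuples_def by blast

lemma rho_TS_subset_SG: "rho_TS VI k sh \<subseteq> SG VI"
  unfolding rho_TS_def by blast

lemma rho_TS_downward_closed:
  assumes "S \<in> rho_TS VI k sh" and "S' \<subseteq> S" and "S' \<noteq> {}"
  shows "S' \<in> rho_TS VI k sh"
  using assms tuples_mono[OF assms(2), of k] unfolding rho_TS_def SG_def by blast

lemma subset_rho_TSD:
  assumes "x \<subseteq> SG VI"
  shows "x \<subseteq> rho_TSD VI k x"
  using assms unfolding rho_TSD_def by blast

lemma rho_TSD_rho_TS_subset:
  assumes "1 \<le> k"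
  shows "rho_TSD VI k (rho_TS VI k sh) \<subseteq> rho_TS VI k sh"
proof
  fix S assume S: "S \<in> rho_TSD VI k (rho_TS VI k sh)"
  let ?x = "rho_TS VI k sh"
  have SG: "S \<in> SG VI"
    and covered: "\<And>T. T \<subseteq> S \<Longrightarrow> card T < k \<Longrightarrow> S = \<Union>{U \<in> ?x. T \<subseteq> U \<and> U \<subseteq> S}"
    using S unfolding rho_TSD_def by blast+
  have "tuples k S \<subseteq> tuples_sh k sh"
  proof
    fix T assume "T \<in> tuples k S"
    then have "T \<subseteq> S" and card_T: "card T = k" unfolding tuples_def by auto
    then have "finite T" and "T \<noteq> {}" using assms by (auto intro: card_ge_0_finite)
    then obtain t where t: "t \<in> T" by blast
    have "T - {t} \<subseteq> S" using \<open>T \<subseteq> S\<close> by blast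
    moreover have "card (T - {t}) < k" using card_T t \<open>finite T\<close> assms by simp
    ultimately have "S = \<Union>{U \<in> ?x. T - {t} \<subseteq> U \<and> U \<subseteq> S}" by (rule covered)
    moreover have "t \<in> S" using t \<open>T \<subseteq> S\<close> by blast
    ultimately obtain U where U: "U \<in> ?x" "T - {t} \<subseteq> U" "t \<in> U" by blast
    then have "T \<in> tuples k U" using card_T unfolding tuples_def by auto
    moreover have "tuples k U \<subseteq> tuples_sh k sh" using U(1) unfolding rho_TS_def by blast
    ultimately show "T \<in> tuples_sh k sh" by blast
  qed
  then show "S \<in> ?x" using SG unfolding rho_TS_def by blast
qed

lemma rho_TSD_rho_TS:
  assumes "1 \<le> k"
  shows "rho_TSD VI k (rho_TS VI k sh) = rho_TS VI k sh"
  using rho_TSD_rho_TS_subset[OF assms] subset_rho_TSD[OF rho_TS_subset_SG] by (rule antisym)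

lemma TS_subset_TSD:
  assumes "1 \<le> k"
  shows "TS VI k \<subseteq> TSD VI k"
proof
  fix x assume "x \<in> TS VI k"
  then obtain sh where x: "x = rho_TS VI k sh" unfolding TS_def by blast
  then have "x \<in> SH VI" using rho_TS_subset_SG unfolding SH_def by blast
  moreover have "x = rho_TSD VI k x" unfolding x by (rule rho_TSD_rho_TS[OF assms, symmetric])
  ultimately show "x \<in> TSD VI k" unfolding TSD_def by blast
qed

lemma rho_TSD_singleton_top:
  assumes "VI \<noteq> {}" and "1 \<le> k"
  shows "rho_TSD VI k {VI} = {VI}"
proof
  have "{VI} \<subseteq> SG VI" using assms(1) unfolding SG_def by blast
  then show "{VI} \<subseteq> rho_TSD VI k {VI}" by (rule subset_rho_TSD)
next
  show "rho_TSD VI k {VI} \<subseteq> {VI}"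
  proof
    fix S assume "S \<in> rho_TSD VI k {VI}"
    then have "S \<in> SG VI"
      and covered: "\<forall>T. T \<subseteq> S \<longrightarrow> card T < k \<longrightarrow> S = \<Union>{U \<in> {VI}. T \<subseteq> U \<and> U \<subseteq> S}"
      unfolding rho_TSD_def by simp_all
    from covered[rule_format, of "{}"] assms(2) have "S = \<Union>{U \<in> {VI}. U \<subseteq> S}" by simp
    also have "\<dots> = (if VI \<subseteq> S then VI else {})" by auto
    finally show "S \<in> {VI}" using \<open>S \<in> SG VI\<close> unfolding SG_def by (auto split: if_splits)
  qed
qed

lemma singleton_top_in_TSD:
  assumes "VI \<noteq> {}" and "1 \<le> k"
  shows "{VI} \<in> TSD VI k"
proof -
  have "{VI} \<in> SH VI" using assms(1) unfolding SH_def SG_def by blast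
  then show ?thesis using rho_TSD_singleton_top[OF assms] unfolding TSD_def by (metis image_eqI)
qed

lemma singleton_top_notin_TS:
  assumes "a \<in> VI" and "b \<in> VI" and "a \<noteq> b"
  shows "{VI} \<notin> TS VI k"
proof
  assume "{VI} \<in> TS VI k"
  then obtain sh where x: "rho_TS VI k sh = {VI}" unfolding TS_def by blast
  then have "VI \<in> rho_TS VI k sh" by simp
  then have "{a} \<in> rho_TS VI k sh" by (rule rho_TS_downward_closed) (simp_all add: assms(1))
  then have "{a} = VI" using x by simp
  then show False using assms by blast
qed

theorem proposition3p11:
  fixes VI :: "'v set" and n k :: nat
  assumes "finite VI" and "card VI = n" and "1 \<le> k" and "k \<le> n"
  shows "TS VI k \<subseteq> TSD VI k \<and> (n > 1 \<longrightarrow> TS VI k \<subset> TSD VI k)"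
proof (intro conjI impI)
  show sub: "TS VI k \<subseteq> TSD VI k" using assms(3) by (rule TS_subset_TSD)
  assume "n > 1"
  then obtain a b where "a \<in> VI" "b \<in> VI" "a \<noteq> b"
    using assms(1,2) by (metis One_nat_def card_le_Suc0_iff_eq not_le)
  then have "{VI} \<notin> TS VI k" by (rule singleton_top_notin_TS)
  moreover have "{VI} \<in> TSD VI k" using \<open>a \<in> VI\<close> assms(3) by (intro singleton_top_in_TSD) auto
  ultimately show "TS VI k \<subset> TSD VI k" using sub by blast
qed

end
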